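(* Work in $\ell_1$ with sequences indexed by $\{0,1,2,\dots\}$ and standard basis $(e_k)$. Let $\xi$ be a random variable with $\Pr\{\xi=k\}=2^{-k}$ for $k=1,2,\dots$, and let $A\colon\Omega\to\mathcal{L}(\ell_1)$ be $Ax:=\xi\,x_\xi\, e_0$ (the operator $\xi|0\rangle\langle\xi|$, whose norm is unbounded in $\omega$). Let $\xi_1,\xi_2,\dots$ be i.i.d. copies of $\xi$ and $A_ix:=\xi_i x_{\xi_i}e_0$. Then for every $x\in\ell_1$, $T>0$, $\varepsilon>0$, $$\lim_{n\to\infty}\Pr\Big\{\sup_{t\in[0,T]}\big\|\big(e^{A_1t/n}\cdots e^{A_nt/n}-e^{t\,\mathbb{E}A}\big)x\big\|_{\ell_1}>\varepsilon\Big\}=0,$$ where $\mathbb{E}Ax=\big(\sum_{k\ge1}k2^{-k}x_k\big)e_0$.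
   Context: $(\Omega,\mathcal{F},\Pr)$ is a probability space; $e^{Bt}=\sum_k t^kB^k/k!$ for bounded $B$. *)

theory Defs
  imports "HOL-Probability.Probability"
begin

definition in_l1 :: "(nat \<Rightarrow> real) \<Rightarrow> bool" where
  "in_l1 x \<longleftrightarrow> summable (\<lambda>k. \<bar>x k\<bar>)"

definition l1norm :: "(nat \<Rightarrow> real) \<Rightarrow> real" where
  "l1norm x = (\<Sum>k. \<bar>x k\<bar>)"

definition opexp :: "((nat \<Rightarrow> real) \<Rightarrow> (nat \<Rightarrow> real)) \<Rightarrow> real \<Rightarrow> (nat \<Rightarrow> real) \<Rightarrow> (nat \<Rightarrow> real)" where
  "opexp B t x = (THE y. in_l1 y \<and>
      (\<lambda>N. l1norm (\<lambda>j. (\<Sum>k<N. (t ^ k / fact k) * (B ^^ k) x j) - y j)) \<longlonglongrightarrow> 0)"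

text \<open>The random operator A_i(omega) x = xi_i x_(xi_i) e_0.\<close>

definition Aop :: "nat \<Rightarrow> (nat \<Rightarrow> real) \<Rightarrow> (nat \<Rightarrow> real)" where
  "Aop m x = (\<lambda>j. if j = 0 then real m * x m else 0)"

definition EAop :: "(nat \<Rightarrow> real) \<Rightarrow> (nat \<Rightarrow> real)" where
  "EAop x = (\<lambda>j. if j = 0 then (\<Sum>k. real (Suc k) / 2 ^ (Suc k) * x (Suc k)) else 0)"

text \<open>The product e^(A_1 t/n) ... e^(A_n t/n), as a map (rightmost factor acts first).\<close>

definition prodexp :: "(nat \<Rightarrow> nat) \<Rightarrow> nat \<Rightarrow> real \<Rightarrow> (nat \<Rightarrow> real) \<Rightarrow> (nat \<Rightarrow> real)" where
  "prodexp m n t = foldr (\<lambda>i f. opexp (Aop (m i)) (t / real n) \<circ> f) [1..<Suc n] id"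

end

theory Submission
  imports Defs "HOL-Library.Landau_Symbols" "HOL-Real_Asymp.Real_Asymp"
begin

(*
  Every factor in sight is a square-zero operator whose range is spanned by e_0 and which does not
  see the coordinate x_0, so each exponential is I + tB and the product collapses:
  (e^{A_1 t/n} ... e^{A_n t/n} - e^{t E A}) x = t (S_n / n - E[xi x_xi]) e_0 with S_n the sum of
  the i.i.d. variables xi_i x_{xi_i}.  The supremum over t in [0, T] is therefore
  T |S_n / n - E[xi x_xi]|, and the claim is the weak law of large numbers for these variables,
  which have finite variance since |xi x_xi| <= xi |x|_1 and xi has geometric tails.
*)

lemma abs_le_l1norm: "in_l1 x \<Longrightarrow> \<bar>x k\<bar> \<le> l1norm x"
  unfolding in_l1_def l1norm_def using sum_le_suminf[of "\<lambda>k. \<bar>x k\<bar>" "{k}"] by simp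

lemma abs_weighted_coordinate_le:
  assumes "in_l1 x"
  shows "\<bar>real k * x k\<bar> \<le> l1norm x * (real k + 1)"
proof -
  have "\<bar>real k * x k\<bar> = real k * \<bar>x k\<bar>" by (simp add: abs_mult)
  also have "\<dots> \<le> real k * l1norm x" by (intro mult_left_mono abs_le_l1norm[OF assms]) simp
  also have "\<dots> \<le> l1norm x * (real k + 1)"
    using abs_le_l1norm[OF assms, of 0] by (simp add: algebra_simps)
  finally show ?thesis .
qed

lemma in_l1_diff: "in_l1 x \<Longrightarrow> in_l1 y \<Longrightarrow> in_l1 (\<lambda>j. x j - y j)"
  unfolding in_l1_def
  by (rule summable_comparison_test[where g="\<lambda>j. \<bar>x j\<bar> + \<bar>y j\<bar>"]) (auto intro: summable_add)

lemma in_l1_add_e0: "in_l1 x \<Longrightarrow> in_l1 (\<lambda>j. x j + (if j = 0 then a else 0))"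
  unfolding in_l1_def
  by (rule summable_comparison_test[where g="\<lambda>j. \<bar>x j\<bar> + (if j = 0 then \<bar>a\<bar> else 0)"])
     (auto intro!: summable_add summable_If_finite_set[where A="{0}", simplified])

lemma l1norm_e0: "l1norm (\<lambda>j. if j = 0 then a else 0) = \<bar>a\<bar>"
proof -
  have e: "(\<lambda>j. \<bar>if j = 0 then a else 0\<bar>) = (\<lambda>j. if j = 0 then \<bar>a\<bar> else 0)" by auto
  show ?thesis
    unfolding l1norm_def e by (rule sums_unique[OF sums_single[of 0 "\<lambda>_. \<bar>a\<bar>"], symmetric])
qed

lemma l1norm_eq_0_imp_zero:
  assumes "in_l1 x" "l1norm x = 0" shows "x = (\<lambda>_. 0)"
proof -
  have "\<forall>j. \<bar>x j\<bar> = 0"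
    using suminf_eq_zero_iff[of "\<lambda>j. \<bar>x j\<bar>"] assms unfolding in_l1_def l1norm_def by simp
  then show ?thesis by auto
qed

lemma funpow_square_zero:
  assumes "B (B x) = (\<lambda>_. 0)" "B (\<lambda>_. 0) = (\<lambda>_. 0)"
  shows "(B ^^ Suc (Suc k)) x = (\<lambda>_. 0)"
proof (induction k)
  case 0
  then show ?case using assms by (simp add: funpow_swap1)
qed (use assms in simp)

lemma exp_partial_sum_square_zero:
  fixes B :: "(nat \<Rightarrow> real) \<Rightarrow> nat \<Rightarrow> real"
  assumes "B (B x) = (\<lambda>_. 0)" "B (\<lambda>_. 0) = (\<lambda>_. 0)"
  shows "(\<Sum>k<Suc (Suc m). (t ^ k / fact k) * (B ^^ k) x j) = x j + t * B x j"
proof (induction m)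
  case (Suc m)
  then show ?case using funpow_square_zero[OF assms, of m] by simp
qed (simp add: numeral_2_eq_2)

lemma opexp_square_zero:
  assumes "B (B x) = (\<lambda>_. 0)" "B (\<lambda>_. 0) = (\<lambda>_. 0)" "in_l1 (\<lambda>j. x j + t * B x j)"
  shows "opexp B t x = (\<lambda>j. x j + t * B x j)"
  unfolding opexp_def
proof (rule the_equality)
  let ?z = "\<lambda>j. x j + t * B x j"
  have tail: "(\<lambda>N. l1norm (\<lambda>j. (\<Sum>k<N. (t ^ k / fact k) * (B ^^ k) x j) - y j)) \<longlonglongrightarrow> 0
      \<longleftrightarrow> (\<lambda>N. l1norm (\<lambda>j. ?z j - y j)) \<longlonglongrightarrow> 0" for y
  proof (intro filterlim_cong refl eventually_sequentiallyI[of 2])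
    fix N :: nat assume "N \<ge> 2"
    then obtain m where "N = Suc (Suc m)" by (metis add_2_eq_Suc le_Suc_ex)
    then show "l1norm (\<lambda>j. (\<Sum>k<N. (t ^ k / fact k) * (B ^^ k) x j) - y j) = l1norm (\<lambda>j. ?z j - y j)"
      by (simp only: exp_partial_sum_square_zero[OF assms(1,2)])
  qed
  show "in_l1 ?z \<and> (\<lambda>N. l1norm (\<lambda>j. (\<Sum>k<N. (t ^ k / fact k) * (B ^^ k) x j) - ?z j)) \<longlonglongrightarrow> 0"
    unfolding tail using assms(3) by (simp add: l1norm_def)
  fix y
  assume y: "in_l1 y \<and> (\<lambda>N. l1norm (\<lambda>j. (\<Sum>k<N. (t ^ k / fact k) * (B ^^ k) x j) - y j)) \<longlonglongrightarrow> 0"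
  then have "(\<lambda>N. l1norm (\<lambda>j. ?z j - y j)) \<longlonglongrightarrow> 0" by (simp only: tail)
  then have "l1norm (\<lambda>j. ?z j - y j) = 0" by (rule LIMSEQ_const_iff[THEN iffD1])
  with y have "(\<lambda>j. ?z j - y j) = (\<lambda>_. 0)"
    by (intro l1norm_eq_0_imp_zero in_l1_diff[OF assms(3)]) simp_all
  then show "y = ?z" by (metis (mono_tags) eq_iff_diff_eq_0 ext)
qed

lemma opexp_e0_valued:
  assumes range: "\<And>y. B y = (\<lambda>j. if j = 0 then B y 0 else 0)"
    and kernel: "\<And>a. B (\<lambda>j. if j = 0 then a else 0) = (\<lambda>_. 0)"
    and "in_l1 y"
  shows "opexp B t y = (\<lambda>j. y j + (if j = 0 then t * B y 0 else 0))"
proof -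
  have "B y j = 0" if "j \<noteq> 0" for j
    using fun_cong[OF range[of y], of j] that by simp
  then have eq: "(\<lambda>j. y j + t * B y j) = (\<lambda>j. y j + (if j = 0 then t * B y 0 else 0))"
    by (simp add: fun_eq_iff)
  have "B (B y) = B (\<lambda>j. if j = 0 then B y 0 else 0)"
    by (rule arg_cong[OF range])
  then have "B (B y) = (\<lambda>_. 0)" by (simp only: kernel)
  moreover have "B (\<lambda>_. 0) = (\<lambda>_. 0)" using kernel[of 0] by simp
  moreover have "in_l1 (\<lambda>j. y j + t * B y j)"
    unfolding eq by (rule in_l1_add_e0[OF assms(3)])
  ultimately show ?thesis unfolding eq[symmetric] by (rule opexp_square_zero)
qed

lemma opexp_Aop:
  "in_l1 y \<Longrightarrow> opexp (Aop m) s y = (\<lambda>j. y j + (if j = 0 then s * (real m * y m) else 0))"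
  by (subst opexp_e0_valued) (auto simp: Aop_def fun_eq_iff)

lemma opexp_EAop:
  "in_l1 y \<Longrightarrow> opexp EAop t y = (\<lambda>j. y j + (if j = 0 then t * EAop y 0 else 0))"
  by (rule opexp_e0_valued) (auto simp: EAop_def fun_eq_iff)

text \<open>Each factor only adds a multiple of \<open>e\<^sub>0\<close>, which the next factor cannot see
  (the weight \<open>real m\<close> kills the coordinate \<open>m = 0\<close>), so the increments simply add up.\<close>

lemma foldr_opexp_Aop:
  assumes "in_l1 x"
  shows "foldr (\<lambda>i f. opexp (Aop (m i)) s \<circ> f) is id x
     = (\<lambda>j. x j + (if j = 0 then s * (\<Sum>i\<leftarrow>is. real (m i) * x (m i)) else 0))"
proof (induction "is")
  case (Cons i "is")
  let ?y = "foldr (\<lambda>i f. opexp (Aop (m i)) s \<circ> f) is id x"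
  have l1: "in_l1 ?y"
    unfolding Cons.IH by (rule in_l1_add_e0[OF assms])
  have invisible: "real (m i) * ?y (m i) = real (m i) * x (m i)"
    unfolding Cons.IH by (cases "m i = 0") auto
  have "foldr (\<lambda>i f. opexp (Aop (m i)) s \<circ> f) (i # is) id x = opexp (Aop (m i)) s ?y"
    by simp
  also have "\<dots> = (\<lambda>j. ?y j + (if j = 0 then s * (real (m i) * ?y (m i)) else 0))"
    by (rule opexp_Aop[OF l1])
  also have "\<dots> = (\<lambda>j. x j + (if j = 0 then s * (\<Sum>i\<leftarrow>i # is. real (m i) * x (m i)) else 0))"
    unfolding invisible unfolding Cons.IH by (simp add: fun_eq_iff distrib_left)
  finally show ?case .
qed (simp add: fun_eq_iff)

lemma prodexp_eq:
  assumes "in_l1 x"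
  shows "prodexp m n t x
     = (\<lambda>j. x j + (if j = 0 then t / real n * (\<Sum>i=1..n. real (m i) * x (m i)) else 0))"
proof -
  have sum: "(\<Sum>i\<leftarrow>[1..<Suc n]. real (m i) * x (m i)) = (\<Sum>i=1..n. real (m i) * x (m i))"
    by (simp only: interv_sum_list_conv_sum_set_nat set_upt atLeastLessThanSuc_atLeastAtMost)
  show ?thesis
    unfolding prodexp_def foldr_opexp_Aop[OF assms] sum ..
qed

lemma l1norm_prodexp_minus_opexp_EAop:
  assumes "in_l1 x"
  shows "l1norm (\<lambda>j. prodexp m n t x j - opexp EAop t x j)
     = \<bar>t\<bar> * \<bar>(\<Sum>i=1..n. real (m i) * x (m i)) / real n - EAop x 0\<bar>"
proof -
  have "(\<lambda>j. prodexp m n t x j - opexp EAop t x j)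
      = (\<lambda>j. if j = 0 then t * ((\<Sum>i=1..n. real (m i) * x (m i)) / real n - EAop x 0) else 0)"
    by (simp add: prodexp_eq[OF assms] opexp_EAop[OF assms] fun_eq_iff algebra_simps)
  then show ?thesis by (simp add: l1norm_e0 abs_mult)
qed

lemma SUP_l1norm_prodexp_minus_opexp_EAop:
  assumes "in_l1 x" "T \<ge> 0"
  shows "(SUP t\<in>{0..T}. l1norm (\<lambda>j. prodexp m n t x j - opexp EAop t x j))
     = T * \<bar>(\<Sum>i=1..n. real (m i) * x (m i)) / real n - EAop x 0\<bar>"
  using assms(2)
  by (simp add: l1norm_prodexp_minus_opexp_EAop[OF assms(1)] cong: SUP_cong_simp)
     (intro cSup_eq_maximum, auto intro: mult_right_mono)

lemma (in prob_space) prob_nat_rv_sums_one: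
  assumes "X \<in> measurable M (count_space UNIV)"
  shows "(\<lambda>k. prob {\<omega> \<in> space M. X \<omega> = (k::nat)}) sums 1"
proof -
  have "(\<lambda>k. prob {\<omega> \<in> space M. X \<omega> = k}) sums prob (\<Union>k. {\<omega> \<in> space M. X \<omega> = k})"
    using assms by (intro measure_UNION) (auto simp: disjoint_family_on_def)
  moreover have "(\<Union>k. {\<omega> \<in> space M. X \<omega> = k}) = space M" by auto
  ultimately show ?thesis by (simp add: prob_space)
qed

lemma (in prob_space) nat_rv_expectation:
  fixes X :: "'a \<Rightarrow> nat" and g :: "nat \<Rightarrow> real"
  assumes X: "X \<in> measurable M (count_space UNIV)"
    and p: "\<And>k. prob {\<omega> \<in> space M. X \<omega> = k} = p k"
    and g: "summable (\<lambda>k. \<bar>g k\<bar> * p k)"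
  shows "integrable M (\<lambda>\<omega>. g (X \<omega>))" and "expectation (\<lambda>\<omega>. g (X \<omega>)) = (\<Sum>k. g k * p k)"
proof -
  have p_nonneg: "0 \<le> p k" for k unfolding p[symmetric] by (rule measure_nonneg)
  have distr: "distr M (count_space UNIV) X = density (count_space UNIV) (\<lambda>k. ennreal (p k))"
  proof (rule measure_eqI_countable)
    fix k :: nat
    have "X -` {k} \<inter> space M = {\<omega> \<in> space M. X \<omega> = k}" by auto
    then show "emeasure (distr M (count_space UNIV) X) {k}
        = emeasure (density (count_space UNIV) (\<lambda>k. ennreal (p k))) {k}"
      using X by (simp add: emeasure_distr emeasure_density emeasure_eq_measure p)
  qed auto
  have "integrable (count_space UNIV) (\<lambda>k. p k * g k)"
    using g by (simp add: integrable_count_space_nat_iff abs_mult p_nonneg mult.commute)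
  then show "integrable M (\<lambda>\<omega>. g (X \<omega>))"
    using X by (simp add: integrable_distr_eq[symmetric] distr integrable_real_density p_nonneg)
  then show "expectation (\<lambda>\<omega>. g (X \<omega>)) = (\<Sum>k. g k * p k)"
    using X \<open>integrable (count_space UNIV) _\<close>
    by (simp add: integral_distr[symmetric] distr integral_real_density p_nonneg
        integral_count_space_nat mult.commute)
qed

lemma (in prob_space) expectation_product_indep:
  fixes Y :: "'i \<Rightarrow> 'a \<Rightarrow> real"
  assumes indep: "indep_vars (\<lambda>_. borel) Y I" and "i \<in> I" "j \<in> I"
    and sq: "\<And>i. i \<in> I \<Longrightarrow> integrable M (\<lambda>\<omega>. Y i \<omega> ^ 2)"
    and centered: "\<And>i. i \<in> I \<Longrightarrow> expectation (Y i) = 0"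
  shows "integrable M (\<lambda>\<omega>. Y i \<omega> * Y j \<omega>)"
    and "expectation (\<lambda>\<omega>. Y i \<omega> * Y j \<omega>) = (if i = j then expectation (\<lambda>\<omega>. Y i \<omega> ^ 2) else 0)"
proof -
  have int: "integrable M (Y k)" if "k \<in> I" for k
  proof (rule square_integrable_imp_integrable[OF _ sq[OF that]])
    show "Y k \<in> borel_measurable M" using indep that unfolding indep_vars_def2 by simp
  qed
  have "integrable M (\<lambda>\<omega>. Y i \<omega> * Y j \<omega>) \<and>
      expectation (\<lambda>\<omega>. Y i \<omega> * Y j \<omega>) = (if i = j then expectation (\<lambda>\<omega>. Y i \<omega> ^ 2) else 0)"
  proof (cases "i = j")
    case True
    then show ?thesis using sq[OF \<open>i \<in> I\<close>] by (simp add: power2_eq_square)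
  next
    case False
    have indep2: "indep_vars (\<lambda>_. borel) Y {i, j}"
      by (rule indep_vars_subset[OF indep]) (use assms(2,3) in auto)
    have int2: "\<And>k. k \<in> {i, j} \<Longrightarrow> integrable M (Y k)" using int assms(2,3) by blast
    have "integrable M (\<lambda>\<omega>. \<Prod>k\<in>{i, j}. Y k \<omega>)"
      by (rule indep_vars_integrable[OF _ indep2 int2]) simp
    moreover have "expectation (\<lambda>\<omega>. \<Prod>k\<in>{i, j}. Y k \<omega>) = (\<Prod>k\<in>{i, j}. expectation (Y k))"
      by (rule indep_vars_lebesgue_integral[OF _ indep2 int2]) simp
    ultimately show ?thesis using False centered[OF \<open>i \<in> I\<close>] by simp
  qed
  then show "integrable M (\<lambda>\<omega>. Y i \<omega> * Y j \<omega>)"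
    and "expectation (\<lambda>\<omega>. Y i \<omega> * Y j \<omega>) = (if i = j then expectation (\<lambda>\<omega>. Y i \<omega> ^ 2) else 0)"
    by simp_all
qed

lemma (in prob_space) expectation_square_sum_indep:
  fixes Y :: "'i \<Rightarrow> 'a \<Rightarrow> real"
  assumes indep: "indep_vars (\<lambda>_. borel) Y I" and J: "finite J" "J \<subseteq> I"
    and sq: "\<And>i. i \<in> I \<Longrightarrow> integrable M (\<lambda>\<omega>. Y i \<omega> ^ 2)"
    and centered: "\<And>i. i \<in> I \<Longrightarrow> expectation (Y i) = 0"
  shows "integrable M (\<lambda>\<omega>. (\<Sum>i\<in>J. Y i \<omega>) ^ 2)"
    and "expectation (\<lambda>\<omega>. (\<Sum>i\<in>J. Y i \<omega>) ^ 2) = (\<Sum>i\<in>J. expectation (\<lambda>\<omega>. Y i \<omega> ^ 2))"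
proof -
  note product = expectation_product_indep[OF indep _ _ sq centered]
  have square: "(\<Sum>i\<in>J. Y i \<omega>) ^ 2 = (\<Sum>i\<in>J. \<Sum>j\<in>J. Y i \<omega> * Y j \<omega>)" for \<omega>
    by (simp add: power2_eq_square sum_product)
  have int: "integrable M (\<lambda>\<omega>. \<Sum>j\<in>J. Y i \<omega> * Y j \<omega>)" if "i \<in> J" for i
    using that J(2) by (intro Bochner_Integration.integrable_sum product(1)) auto
  then show "integrable M (\<lambda>\<omega>. (\<Sum>i\<in>J. Y i \<omega>) ^ 2)"
    unfolding square by (rule Bochner_Integration.integrable_sum)
  have "expectation (\<lambda>\<omega>. (\<Sum>i\<in>J. Y i \<omega>) ^ 2)
      = (\<Sum>i\<in>J. expectation (\<lambda>\<omega>. \<Sum>j\<in>J. Y i \<omega> * Y j \<omega>))"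
    unfolding square by (rule Bochner_Integration.integral_sum) (rule int)
  also have "\<dots> = (\<Sum>i\<in>J. \<Sum>j\<in>J. expectation (\<lambda>\<omega>. Y i \<omega> * Y j \<omega>))"
    using J(2) by (intro sum.cong refl Bochner_Integration.integral_sum product(1)) auto
  also have "\<dots> = (\<Sum>i\<in>J. \<Sum>j\<in>J. if i = j then expectation (\<lambda>\<omega>. Y i \<omega> ^ 2) else 0)"
    using J(2) by (intro sum.cong refl product(2)) auto
  also have "\<dots> = (\<Sum>i\<in>J. expectation (\<lambda>\<omega>. Y i \<omega> ^ 2))"
    using J(1) by simp
  finally show "expectation (\<lambda>\<omega>. (\<Sum>i\<in>J. Y i \<omega>) ^ 2) = (\<Sum>i\<in>J. expectation (\<lambda>\<omega>. Y i \<omega> ^ 2))" .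
qed

lemma (in prob_space) tendsto_prob_sample_mean_deviation:
  fixes Y :: "nat \<Rightarrow> 'a \<Rightarrow> real"
  assumes indep: "indep_vars (\<lambda>_. borel) Y {1..}"
    and sq: "\<And>i. i \<ge> 1 \<Longrightarrow> integrable M (\<lambda>\<omega>. Y i \<omega> ^ 2)"
    and centered: "\<And>i. i \<ge> 1 \<Longrightarrow> expectation (Y i) = 0"
    and variance: "\<And>i. i \<ge> 1 \<Longrightarrow> expectation (\<lambda>\<omega>. Y i \<omega> ^ 2) = V"
    and "\<delta> > 0"
  shows "(\<lambda>n. prob {\<omega> \<in> space M. \<delta> < \<bar>(\<Sum>i=1..n. Y i \<omega>) / real n\<bar>}) \<longlonglongrightarrow> 0"
proof (rule tendsto_sandwich[of "\<lambda>_. 0" _ _ "\<lambda>n. V / \<delta>\<^sup>2 / real n"])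
  note moments = expectation_square_sum_indep[OF indep finite_atLeastAtMost _ sq centered]
  have "prob {\<omega> \<in> space M. \<delta> < \<bar>(\<Sum>i=1..n. Y i \<omega>) / real n\<bar>} \<le> V / \<delta>\<^sup>2 / real n"
    if "n \<ge> 1" for n
  proof -
    have "Y i \<in> borel_measurable M" if "i \<ge> 1" for i
      using indep that unfolding indep_vars_def2 by simp
    then have measurable[measurable]: "(\<lambda>\<omega>. \<Sum>i=1..n. Y i \<omega>) \<in> borel_measurable M"
      by (intro borel_measurable_sum) auto
    have "{\<omega> \<in> space M. \<delta> < \<bar>(\<Sum>i=1..n. Y i \<omega>) / real n\<bar>}
        \<subseteq> {\<omega> \<in> space M. real n * \<delta> \<le> \<bar>\<Sum>i=1..n. Y i \<omega>\<bar>}"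
      using that by (auto simp: field_simps)
    then have "prob {\<omega> \<in> space M. \<delta> < \<bar>(\<Sum>i=1..n. Y i \<omega>) / real n\<bar>}
        \<le> prob {\<omega> \<in> space M. real n * \<delta> \<le> \<bar>\<Sum>i=1..n. Y i \<omega>\<bar>}"
      by (intro finite_measure_mono) measurable
    also have "\<dots> \<le> expectation (\<lambda>\<omega>. (\<Sum>i=1..n. Y i \<omega>) ^ 2) / (real n * \<delta>)\<^sup>2"
      using that \<open>\<delta> > 0\<close> measurable moments(1) by (intro second_moment_method) auto
    also have "\<dots> = real n * V / (real n * \<delta>)\<^sup>2"
      using moments(2)[of 1 n] variance by auto
    also have "\<dots> = V / \<delta>\<^sup>2 / real n"
      using that \<open>\<delta> > 0\<close> by (simp add: power2_eq_square field_simps)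
    finally show ?thesis .
  qed
  then show "\<forall>\<^sub>F n in sequentially. prob {\<omega> \<in> space M. \<delta> < \<bar>(\<Sum>i=1..n. Y i \<omega>) / real n\<bar>}
      \<le> V / \<delta>\<^sup>2 / real n"
    by (auto intro: eventually_sequentiallyI[of 1])
  show "(\<lambda>n. V / \<delta>\<^sup>2 / real n) \<longlonglongrightarrow> 0" by (rule lim_const_over_n)
qed simp_all

definition geom_pmf :: "nat \<Rightarrow> real" where
  "geom_pmf k = (if k = 0 then 0 else 1 / 2 ^ k)"

lemma geom_pmf_nonneg: "0 \<le> geom_pmf k"
  by (simp add: geom_pmf_def)

lemma geom_pmf_le: "geom_pmf k \<le> (1 / 2) ^ k"
  by (simp add: geom_pmf_def power_one_over)

lemma geom_pmf_Suc_sums_one: "(\<lambda>k. geom_pmf (Suc k)) sums 1"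
proof -
  have "(\<lambda>k. 1 / 2 * (1 / 2) ^ k) sums (1 / 2 * (1 / (1 - 1 / 2 :: real)))"
    by (intro sums_mult geometric_sums) simp
  then show ?thesis by (simp add: geom_pmf_def power_one_over)
qed

lemma geom_pmf_sums_one: "geom_pmf sums 1"
  using geom_pmf_Suc_sums_one sums_Suc_iff[of geom_pmf 1] by (simp add: geom_pmf_def)

lemma summable_square_geom_pmf: "summable (\<lambda>k. (real k + 1) ^ 2 * geom_pmf k)"
proof (rule summable_comparison_test_bigo)
  have "(\<lambda>k. (real k + 1) ^ 2 * geom_pmf k) \<in> O(\<lambda>k. (real k + 1) ^ 2 * (1 / 2) ^ k)"
    by (intro bigoI[of _ 1] always_eventually allI)
       (simp add: geom_pmf_nonneg geom_pmf_le mult_left_mono)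
  moreover have "(\<lambda>k. (real k + 1) ^ 2 * (1 / 2) ^ k) \<in> O(\<lambda>k. (3 / 4) ^ k)"
    by real_asymp
  ultimately show "(\<lambda>k. (real k + 1) ^ 2 * geom_pmf k) \<in> O(\<lambda>k. (3 / 4) ^ k)"
    by (rule landau_o.big_trans)
qed simp

lemma summable_geom_pmf_linear_growth:
  fixes g :: "nat \<Rightarrow> real"
  assumes growth: "\<And>k. \<bar>g k\<bar> \<le> C * (real k + 1)"
  shows "summable (\<lambda>k. \<bar>g k\<bar> * geom_pmf k)" and "summable (\<lambda>k. \<bar>g k ^ 2\<bar> * geom_pmf k)"
proof -
  have "0 \<le> C" using growth[of 0] by simp
  have "\<bar>g k\<bar> \<le> C * (real k + 1) ^ 2" for k
  proof -
    have "real k + 1 \<le> (real k + 1) ^ 2" by (rule self_le_power) simp_all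
    then show ?thesis using growth[of k] \<open>0 \<le> C\<close> by (meson mult_left_mono order.trans)
  qed
  then have "norm (\<bar>g k\<bar> * geom_pmf k) \<le> C * ((real k + 1) ^ 2 * geom_pmf k)" for k
    by (simp add: abs_mult geom_pmf_nonneg mult_right_mono flip: mult.assoc)
  then show "summable (\<lambda>k. \<bar>g k\<bar> * geom_pmf k)"
    by (intro summable_comparison_test'[OF summable_mult[OF summable_square_geom_pmf]])
  have "\<bar>g k ^ 2\<bar> \<le> C ^ 2 * (real k + 1) ^ 2" for k
  proof -
    have "\<bar>g k\<bar> ^ 2 \<le> (C * (real k + 1)) ^ 2" by (rule power_mono[OF growth]) simp
    then show ?thesis by (simp add: power_mult_distrib)
  qed
  then have "norm (\<bar>g k ^ 2\<bar> * geom_pmf k) \<le> C ^ 2 * ((real k + 1) ^ 2 * geom_pmf k)" for k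
    by (simp add: abs_mult geom_pmf_nonneg mult_right_mono flip: mult.assoc)
  then show "summable (\<lambda>k. \<bar>g k ^ 2\<bar> * geom_pmf k)"
    by (intro summable_comparison_test'[OF summable_mult[OF summable_square_geom_pmf]])
qed

lemma (in prob_space) geom_rv_moments:
  fixes X :: "'a \<Rightarrow> nat" and g :: "nat \<Rightarrow> real"
  assumes X: "X \<in> measurable M (count_space UNIV)"
    and law: "\<And>k. k \<ge> 1 \<Longrightarrow> prob {\<omega> \<in> space M. X \<omega> = k} = 1 / 2 ^ k"
    and growth: "\<And>k. \<bar>g k\<bar> \<le> C * (real k + 1)"
  shows "integrable M (\<lambda>\<omega>. g (X \<omega>) ^ 2)"
    and "expectation (\<lambda>\<omega>. g (X \<omega>)) = (\<Sum>k. g k * geom_pmf k)"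
    and "expectation (\<lambda>\<omega>. g (X \<omega>) ^ 2) = (\<Sum>k. g k ^ 2 * geom_pmf k)"
proof -
  \<comment> \<open>The law is prescribed only for \<open>k \<ge> 1\<close>; total mass one forces \<open>X \<noteq> 0\<close> almost surely.\<close>
  have law_Suc: "(\<lambda>k. prob {\<omega> \<in> space M. X \<omega> = Suc k}) = (\<lambda>k. geom_pmf (Suc k))"
    using law by (simp add: geom_pmf_def)
  have "(\<lambda>k. prob {\<omega> \<in> space M. X \<omega> = Suc k}) sums 1"
    unfolding law_Suc by (rule geom_pmf_Suc_sums_one)
  then have "(\<lambda>k. prob {\<omega> \<in> space M. X \<omega> = k}) sums (1 + prob {\<omega> \<in> space M. X \<omega> = 0})"
    using sums_Suc_iff[of "\<lambda>k. prob {\<omega> \<in> space M. X \<omega> = k}" 1] by simp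
  from sums_unique2[OF this prob_nat_rv_sums_one[OF X]]
  have "prob {\<omega> \<in> space M. X \<omega> = 0} = 0" by simp
  then have pmf: "prob {\<omega> \<in> space M. X \<omega> = k} = geom_pmf k" for k
    using law[of k] by (cases k) (simp_all add: geom_pmf_def)
  note summable = summable_geom_pmf_linear_growth[OF growth]
  show "integrable M (\<lambda>\<omega>. g (X \<omega>) ^ 2)"
    by (rule nat_rv_expectation(1)[OF X pmf summable(2)])
  show "expectation (\<lambda>\<omega>. g (X \<omega>)) = (\<Sum>k. g k * geom_pmf k)"
    by (rule nat_rv_expectation(2)[OF X pmf summable(1)])
  show "expectation (\<lambda>\<omega>. g (X \<omega>) ^ 2) = (\<Sum>k. g k ^ 2 * geom_pmf k)"
    by (rule nat_rv_expectation(2)[OF X pmf summable(2)])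
qed

lemma EAop_sums:
  assumes "in_l1 x"
  shows "(\<lambda>k. real k * x k * geom_pmf k) sums EAop x 0"
proof -
  note growth = abs_weighted_coordinate_le[OF assms]
  have "(\<lambda>k. \<bar>real k * x k * geom_pmf k\<bar>) = (\<lambda>k. \<bar>real k * x k\<bar> * geom_pmf k)"
    by (simp add: abs_mult geom_pmf_nonneg)
  then have "summable (\<lambda>k. real k * x k * geom_pmf k)"
    using summable_geom_pmf_linear_growth(1)[OF growth] summable_rabs_cancel by metis
  then have "summable (\<lambda>k. real (Suc k) * x (Suc k) * geom_pmf (Suc k))"
    using summable_Suc_iff[of "\<lambda>k. real k * x k * geom_pmf k"] by simp
  moreover have "(\<lambda>k. real (Suc k) * x (Suc k) * geom_pmf (Suc k))
      = (\<lambda>k. real (Suc k) / 2 ^ Suc k * x (Suc k))"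
    by (simp add: geom_pmf_def fun_eq_iff)
  ultimately have "(\<lambda>k. real (Suc k) * x (Suc k) * geom_pmf (Suc k)) sums EAop x 0"
    by (simp add: EAop_def summable_sums)
  then show ?thesis
    using sums_Suc_iff[of "\<lambda>k. real k * x k * geom_pmf k" "EAop x 0"] by simp
qed

lemma (in prob_space) tendsto_prob_empirical_mean_deviation:
  fixes \<xi> :: "nat \<Rightarrow> 'a \<Rightarrow> nat"
  assumes indep: "indep_vars (\<lambda>_. count_space UNIV) \<xi> {1..}"
    and law: "\<And>i k. i \<ge> 1 \<Longrightarrow> k \<ge> 1 \<Longrightarrow> prob {\<omega> \<in> space M. \<xi> i \<omega> = k} = 1 / 2 ^ k"
    and "in_l1 x" and "\<delta> > 0"
  shows "(\<lambda>n. prob {\<omega> \<in> space M.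
      \<delta> < \<bar>(\<Sum>i=1..n. real (\<xi> i \<omega>) * x (\<xi> i \<omega>)) / real n - EAop x 0\<bar>}) \<longlonglongrightarrow> 0"
proof -
  define c where "c = EAop x 0"
  define h where "h k = real k * x k - c" for k
  define Y where "Y = (\<lambda>i \<omega>. h (\<xi> i \<omega>))"
  have rv: "\<xi> i \<in> measurable M (count_space UNIV)" if "i \<ge> 1" for i
    using indep that unfolding indep_vars_def2 by simp
  have growth: "\<bar>h k\<bar> \<le> (l1norm x + \<bar>c\<bar>) * (real k + 1)" for k
  proof -
    have "\<bar>h k\<bar> \<le> \<bar>real k * x k\<bar> + \<bar>c\<bar>" unfolding h_def by (rule abs_triangle_ineq4)
    also have "\<dots> \<le> l1norm x * (real k + 1) + \<bar>c\<bar> * (real k + 1)"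
      by (intro add_mono abs_weighted_coordinate_le[OF \<open>in_l1 x\<close>]) (simp add: algebra_simps)
    finally show ?thesis by (simp add: distrib_right)
  qed
  have moments: "integrable M (\<lambda>\<omega>. h (\<xi> i \<omega>) ^ 2)"
      "expectation (\<lambda>\<omega>. h (\<xi> i \<omega>)) = (\<Sum>k. h k * geom_pmf k)"
      "expectation (\<lambda>\<omega>. h (\<xi> i \<omega>) ^ 2) = (\<Sum>k. h k ^ 2 * geom_pmf k)" if "i \<ge> 1" for i
    using geom_rv_moments[OF rv[OF that] law[OF that] growth] by simp_all
  have "(\<lambda>k. h k * geom_pmf k) sums (c - c * 1)"
    unfolding h_def left_diff_distrib
    by (intro sums_diff sums_mult geom_pmf_sums_one EAop_sums[OF \<open>in_l1 x\<close>, folded c_def])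
  then have mean_zero: "(\<Sum>k. h k * geom_pmf k) = 0" by (simp add: sums_iff)
  have wlln: "(\<lambda>n. prob {\<omega> \<in> space M. \<delta> < \<bar>(\<Sum>i=1..n. Y i \<omega>) / real n\<bar>}) \<longlonglongrightarrow> 0"
  proof (rule tendsto_prob_sample_mean_deviation[OF _ _ _ _ \<open>\<delta> > 0\<close>])
    show "indep_vars (\<lambda>_. borel) Y {1..}"
      unfolding Y_def by (rule indep_vars_compose2[OF indep]) simp
    show "integrable M (\<lambda>\<omega>. Y i \<omega> ^ 2)" if "i \<ge> 1" for i
      unfolding Y_def using moments(1)[OF that] by simp
    show "expectation (Y i) = 0" if "i \<ge> 1" for i
      unfolding Y_def using moments(2)[OF that] mean_zero by simp
    show "expectation (\<lambda>\<omega>. Y i \<omega> ^ 2) = (\<Sum>k. h k ^ 2 * geom_pmf k)" if "i \<ge> 1" for i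
      unfolding Y_def using moments(3)[OF that] by simp
  qed
  have "(\<Sum>i=1..n. real (\<xi> i \<omega>) * x (\<xi> i \<omega>)) / real n - c = (\<Sum>i=1..n. Y i \<omega>) / real n"
    if "n \<ge> 1" for n \<omega>
    using that by (simp add: Y_def h_def sum_subtractf field_simps)
  then have "\<forall>\<^sub>F n in sequentially.
      prob {\<omega> \<in> space M. \<delta> < \<bar>(\<Sum>i=1..n. Y i \<omega>) / real n\<bar>}
      = prob {\<omega> \<in> space M. \<delta> < \<bar>(\<Sum>i=1..n. real (\<xi> i \<omega>) * x (\<xi> i \<omega>)) / real n - c\<bar>}"
    by (intro eventually_sequentiallyI[of 1]) simp
  with wlln show ?thesis unfolding c_def by (rule Lim_transform_eventually)
qed

theorem mainTheorem9:
  fixes M :: "'a measure" and \<xi> :: "nat \<Rightarrow> 'a \<Rightarrow> nat"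
    and x :: "nat \<Rightarrow> real" and T \<epsilon> :: real
  assumes "prob_space M"
    and "prob_space.indep_vars M (\<lambda>_. count_space UNIV) \<xi> {1..}"
    and "\<And>i k. i \<ge> 1 \<Longrightarrow> k \<ge> 1 \<Longrightarrow> measure M {\<omega> \<in> space M. \<xi> i \<omega> = k} = 1 / 2 ^ k"
    and "in_l1 x" and "T > 0" and "\<epsilon> > 0"
  shows "(\<forall>n. {\<omega> \<in> space M. (SUP t\<in>{0..T}.
              l1norm (\<lambda>j. prodexp (\<lambda>i. \<xi> i \<omega>) n t x j - opexp EAop t x j)) > \<epsilon>} \<in> sets M)
    \<and> (\<lambda>n. measure M {\<omega> \<in> space M. (SUP t\<in>{0..T}.
              l1norm (\<lambda>j. prodexp (\<lambda>i. \<xi> i \<omega>) n t x j - opexp EAop t x j)) > \<epsilon>})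
      \<longlonglongrightarrow> 0"
proof -
  interpret prob_space M by fact
  define S where "S n \<omega> = (\<Sum>i=1..n. real (\<xi> i \<omega>) * x (\<xi> i \<omega>))" for n \<omega>
  have event: "{\<omega> \<in> space M. (SUP t\<in>{0..T}.
              l1norm (\<lambda>j. prodexp (\<lambda>i. \<xi> i \<omega>) n t x j - opexp EAop t x j)) > \<epsilon>}
      = {\<omega> \<in> space M. \<epsilon> / T < \<bar>S n \<omega> / real n - EAop x 0\<bar>}" for n
    using assms(5) by (simp add: SUP_l1norm_prodexp_minus_opexp_EAop[OF assms(4)] S_def
        pos_divide_less_eq mult.commute)
  have "{\<omega> \<in> space M. \<epsilon> / T < \<bar>S n \<omega> / real n - EAop x 0\<bar>} \<in> sets M" for n
  proof -
    have "\<xi> i \<in> measurable M (count_space UNIV)" if "i \<ge> 1" for i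
      using assms(2) that unfolding indep_vars_def2 by simp
    then have [measurable]: "S n \<in> borel_measurable M"
      unfolding S_def
      by (intro borel_measurable_sum measurable_compose[OF _ borel_measurable_count_space]) auto
    show ?thesis by measurable
  qed
  moreover have "(\<lambda>n. prob {\<omega> \<in> space M. \<epsilon> / T < \<bar>S n \<omega> / real n - EAop x 0\<bar>}) \<longlonglongrightarrow> 0"
    unfolding S_def using assms(2-6)
    by (intro tendsto_prob_empirical_mean_deviation) simp_all
  ultimately show ?thesis unfolding event by simp
qed

end
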